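(* Let $G$ be a graph decomposable into $G_1$ and $G_2$. Then $G$ is double-critical if and only if $G_1$ and $G_2$ are both double-critical.
   Context: All graphs are finite and simple. A graph $G$ is decomposable (into $G_1$ and $G_2$) if it consists of two disjoint non-empty graphs $G_1$ and $G_2$ together with all edges joining a vertex of $G_1$ and a vertex of $G_2$. A graph $G$ is (vertex-)critical if $\chi(G-v)<\chi(G)$ for every vertex $v$; a critical graph is double-critical if $\chi(G-x-y)\le\chi(G)-2$ for every edge $xy\in E(G)$. *)

theory Defs
  imports Main
begin

type_synonym 'a graph = "'a set \<times> 'a set set"

definition verts :: "'a graph \<Rightarrow> 'a set" where "verts G = fst G"
definition edges :: "'a graph \<Rightarrow> 'a set set" where "edges G = snd G"

definition simple_graph :: "'a graph \<Rightarrow> bool" where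
  "simple_graph G \<longleftrightarrow> finite (verts G) \<and>
     (\<forall>e\<in>edges G. e \<subseteq> verts G \<and> card e = 2)"

definition colouring :: "'a graph \<Rightarrow> nat \<Rightarrow> ('a \<Rightarrow> nat) \<Rightarrow> bool" where
  "colouring G k f \<longleftrightarrow> (\<forall>v\<in>verts G. f v < k) \<and>
     (\<forall>x y. {x, y} \<in> edges G \<longrightarrow> x \<noteq> y \<longrightarrow> f x \<noteq> f y)"

definition chi :: "'a graph \<Rightarrow> nat" where
  "chi G = (LEAST k. \<exists>f. colouring G k f)"

definition del_verts :: "'a graph \<Rightarrow> 'a set \<Rightarrow> 'a graph" where
  "del_verts G S = (verts G - S, {e\<in>edges G. e \<inter> S = {}})"

definition critical :: "'a graph \<Rightarrow> bool" where
  "critical G \<longleftrightarrow> (\<forall>v\<in>verts G. chi (del_verts G {v}) < chi G)"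

definition double_critical :: "'a graph \<Rightarrow> bool" where
  "double_critical G \<longleftrightarrow> critical G \<and>
     (\<forall>x y. {x, y} \<in> edges G \<longrightarrow> x \<noteq> y \<longrightarrow> chi (del_verts G {x, y}) \<le> chi G - 2)"

definition decomposable_into :: "'a graph \<Rightarrow> 'a graph \<Rightarrow> 'a graph \<Rightarrow> bool" where
  "decomposable_into G G1 G2 \<longleftrightarrow>
     simple_graph G1 \<and> simple_graph G2 \<and>
     verts G1 \<noteq> {} \<and> verts G2 \<noteq> {} \<and> verts G1 \<inter> verts G2 = {} \<and>
     verts G = verts G1 \<union> verts G2 \<and>
     edges G = edges G1 \<union> edges G2 \<union> {{x, y} | x y. x \<in> verts G1 \<and> y \<in> verts G2}"

end

theory Submission
  imports Defs
begin

text \<open>In a join every vertex of one side is adjacent to every vertex of the other, so the two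
  sides need disjoint colour sets and the chromatic number is additive. Deleting vertices keeps
  the join structure, so \<open>\<chi>(G - S) = \<chi>(G\<^sub>1 - S) + \<chi>(G\<^sub>2 - S)\<close>. Hence deleting vertices of one
  side lowers \<open>\<chi>(G)\<close> exactly as it lowers \<open>\<chi>\<close> of that side, and deleting the ends of an edge
  between the sides lowers \<open>\<chi>(G)\<close> by at least 2 as soon as both sides are critical.\<close>

lemma verts_del_verts [simp]: "verts (del_verts G S) = verts G - S"
  by (simp add: del_verts_def verts_def)

lemma edges_del_verts [simp]: "edges (del_verts G S) = {e \<in> edges G. e \<inter> S = {}}"
  by (simp add: del_verts_def edges_def)

lemma del_verts_empty [simp]: "del_verts G {} = G"
  by (cases G) (simp add: del_verts_def verts_def edges_def)

lemma simple_graph_del_verts: "simple_graph G \<Longrightarrow> simple_graph (del_verts G S)"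
  unfolding simple_graph_def by auto

lemma simple_graph_edge_verts:
  "simple_graph G \<Longrightarrow> {x, y} \<in> edges G \<Longrightarrow> x \<in> verts G \<and> y \<in> verts G"
  unfolding simple_graph_def by auto

lemma del_verts_Int_verts:
  "simple_graph G \<Longrightarrow> del_verts G (S \<inter> verts G) = del_verts G S"
  unfolding simple_graph_def del_verts_def verts_def edges_def by auto

lemma chi_le: "colouring G k f \<Longrightarrow> chi G \<le> k"
  unfolding chi_def by (rule Least_le) blast

lemma colouring_mono:
  assumes "colouring G k f" "verts H \<subseteq> verts G" "edges H \<subseteq> edges G"
  shows "colouring H k f"
  using assms unfolding colouring_def by blast

text \<open>Renumbering the colours actually used by a proper colouring.\<close>
lemma chi_le_card_image:
  assumes f: "colouring G k f" and G: "simple_graph G"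
  shows "chi G \<le> card (f ` verts G)"
proof -
  have "finite (f ` verts G)" using G by (simp add: simple_graph_def)
  then obtain g and n :: nat where g: "g ` f ` verts G = {..<n}" "inj_on g (f ` verts G)"
    using finite_imp_inj_to_nat_seg by (metis lessThan_def)
  have "colouring G n (g \<circ> f)"
    unfolding colouring_def
  proof (intro conjI allI impI ballI)
    fix v assume "v \<in> verts G"
    then show "(g \<circ> f) v < n" using g(1) by auto
  next
    fix x y assume e: "{x, y} \<in> edges G" "x \<noteq> y"
    then have "f x \<noteq> f y" using f unfolding colouring_def by blast
    moreover have "x \<in> verts G" "y \<in> verts G" using simple_graph_edge_verts[OF G e(1)] by auto
    ultimately show "(g \<circ> f) x \<noteq> (g \<circ> f) y" using g(2) by (auto dest: inj_onD)
  qed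
  moreover have "card (f ` verts G) = n" using card_image[OF g(2)] g(1) by simp
  ultimately show ?thesis using chi_le by metis
qed

lemma chi_colouring:
  assumes G: "simple_graph G"
  shows "\<exists>f. colouring G (chi G) f"
proof -
  have "finite (verts G)" using G by (simp add: simple_graph_def)
  then obtain f and n :: nat where f: "f ` verts G = {..<n}" "inj_on f (verts G)"
    using finite_imp_inj_to_nat_seg by (metis lessThan_def)
  have "colouring G n f"
    using f simple_graph_edge_verts[OF G] unfolding colouring_def by (auto dest: inj_onD)
  then have "\<exists>k f. colouring G k f" by blast
  then show ?thesis unfolding chi_def by (rule LeastI_ex)
qed

lemma chi_ge_2_if_edge:
  assumes G: "simple_graph G" and e: "{x, y} \<in> edges G" "x \<noteq> y"
  shows "2 \<le> chi G"
proof -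
  obtain f where f: "colouring G (chi G) f" using chi_colouring[OF G] by blast
  have "f x < chi G" "f y < chi G" "f x \<noteq> f y"
    using f simple_graph_edge_verts[OF G e(1)] e unfolding colouring_def by auto
  then show ?thesis by linarith
qed

text \<open>A decomposition without the requirement that the two sides be non-empty; this weaker
  notion is preserved by deleting vertices.\<close>
definition join_of :: "'a graph \<Rightarrow> 'a graph \<Rightarrow> 'a graph \<Rightarrow> bool" where
  "join_of G G1 G2 \<longleftrightarrow> simple_graph G1 \<and> simple_graph G2 \<and> verts G1 \<inter> verts G2 = {} \<and>
     verts G = verts G1 \<union> verts G2 \<and>
     edges G = edges G1 \<union> edges G2 \<union> {{x, y} | x y. x \<in> verts G1 \<and> y \<in> verts G2}"

lemma decomposable_into_imp_join_of: "decomposable_into G G1 G2 \<Longrightarrow> join_of G G1 G2"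
  unfolding decomposable_into_def join_of_def by blast

lemma join_of_commute: "join_of G G1 G2 \<Longrightarrow> join_of G G2 G1"
  unfolding join_of_def by (auto simp: insert_commute)

lemma join_of_del_verts:
  assumes j: "join_of G G1 G2"
  shows "join_of (del_verts G S) (del_verts G1 S) (del_verts G2 S)"
proof -
  have E: "edges G = edges G1 \<union> edges G2 \<union> {{x, y} | x y. x \<in> verts G1 \<and> y \<in> verts G2}"
    using j unfolding join_of_def by blast
  have cross: "{{x, y} | x y. x \<in> verts G1 \<and> y \<in> verts G2} \<inter> {e. e \<inter> S = {}} =
      {{x, y} | x y. x \<in> verts G1 - S \<and> y \<in> verts G2 - S}"
    by blast
  have "{e \<in> edges G. e \<inter> S = {}} = edges G \<inter> {e. e \<inter> S = {}}" by blast
  also have "\<dots> = {e \<in> edges G1. e \<inter> S = {}} \<union> {e \<in> edges G2. e \<inter> S = {}} \<union>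
      {{x, y} | x y. x \<in> verts G1 - S \<and> y \<in> verts G2 - S}"
    unfolding E cross[symmetric] by blast
  finally show ?thesis using j unfolding join_of_def by (auto simp: simple_graph_del_verts)
qed

lemma simple_graph_join:
  assumes j: "join_of G G1 G2"
  shows "simple_graph G"
proof -
  have s1: "simple_graph G1" and s2: "simple_graph G2" and dj: "verts G1 \<inter> verts G2 = {}"
    and V: "verts G = verts G1 \<union> verts G2"
    and E: "edges G = edges G1 \<union> edges G2 \<union> {{x, y} | x y. x \<in> verts G1 \<and> y \<in> verts G2}"
    using j unfolding join_of_def by blast+
  have "e \<subseteq> verts G \<and> card e = 2" if "e \<in> edges G" for e
  proof -
    from that consider "e \<in> edges G1" | "e \<in> edges G2"
      | a b where "e = {a, b}" "a \<in> verts G1" "b \<in> verts G2"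
      using E by blast
    then show ?thesis
    proof cases
      case 3
      then have "a \<noteq> b" using dj by blast
      then show ?thesis using 3 V by auto
    qed (use s1 s2 V in \<open>auto simp: simple_graph_def\<close>)
  qed
  moreover have "finite (verts G)" using s1 s2 V by (simp add: simple_graph_def)
  ultimately show ?thesis by (simp add: simple_graph_def)
qed

lemma colouring_join:
  assumes j: "join_of G G1 G2" and f1: "colouring G1 k1 f1" and f2: "colouring G2 k2 f2"
  shows "colouring G (k1 + k2) (\<lambda>x. if x \<in> verts G1 then f1 x else k1 + f2 x)"
    (is "colouring G _ ?f")
  unfolding colouring_def
proof (intro conjI allI impI ballI)
  fix v assume "v \<in> verts G"
  then show "?f v < k1 + k2" using j f1 f2 unfolding join_of_def colouring_def by auto
next
  fix x y assume e: "{x, y} \<in> edges G" "x \<noteq> y"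
  have s1: "simple_graph G1" and s2: "simple_graph G2" and dj: "verts G1 \<inter> verts G2 = {}"
    and E: "edges G = edges G1 \<union> edges G2 \<union> {{x, y} | x y. x \<in> verts G1 \<and> y \<in> verts G2}"
    using j unfolding join_of_def by blast+
  from e(1) E consider "{x, y} \<in> edges G1" | "{x, y} \<in> edges G2"
    | a b where "{x, y} = {a, b}" "a \<in> verts G1" "b \<in> verts G2"
    by blast
  then show "?f x \<noteq> ?f y"
  proof cases
    case 1
    then show ?thesis using simple_graph_edge_verts[OF s1] f1 e(2) unfolding colouring_def by auto
  next
    case 2
    then have "x \<notin> verts G1" "y \<notin> verts G1" using simple_graph_edge_verts[OF s2] dj by auto
    then show ?thesis using 2 f2 e(2) unfolding colouring_def by auto
  next
    case 3
    have "b \<notin> verts G1" using 3 dj by blast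
    moreover have "f1 a < k1" using f1 3(2) unfolding colouring_def by blast
    ultimately have "?f a \<noteq> ?f b" using 3(2) by simp
    then show ?thesis using 3(1) by (auto simp: doubleton_eq_iff)
  qed
qed

text \<open>The lower bound: an optimal colouring of \<open>G\<close> uses disjoint colour sets on the two sides.\<close>
lemma chi_join:
  assumes j: "join_of G G1 G2"
  shows "chi G = chi G1 + chi G2"
proof (rule antisym)
  have s1: "simple_graph G1" and s2: "simple_graph G2"
    and sub1: "verts G1 \<subseteq> verts G" "edges G1 \<subseteq> edges G"
    and sub2: "verts G2 \<subseteq> verts G" "edges G2 \<subseteq> edges G"
    using j unfolding join_of_def by auto
  obtain f1 where f1: "colouring G1 (chi G1) f1" using chi_colouring[OF s1] by blast
  obtain f2 where f2: "colouring G2 (chi G2) f2" using chi_colouring[OF s2] by blast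
  show "chi G \<le> chi G1 + chi G2" using chi_le[OF colouring_join[OF j f1 f2]] .
  obtain f where f: "colouring G (chi G) f" using chi_colouring[OF simple_graph_join[OF j]] by blast
  have fin: "finite (f ` verts G1)" "finite (f ` verts G2)"
    using s1 s2 by (auto simp: simple_graph_def)
  have disj: "f ` verts G1 \<inter> f ` verts G2 = {}"
  proof (rule ccontr)
    assume "f ` verts G1 \<inter> f ` verts G2 \<noteq> {}"
    then obtain a b where ab: "a \<in> verts G1" "b \<in> verts G2" "f a = f b" by auto
    then have "{a, b} \<in> edges G" "a \<noteq> b" using j unfolding join_of_def by auto
    then show False using f ab(3) unfolding colouring_def by blast
  qed
  have used: "f ` verts G1 \<union> f ` verts G2 \<subseteq> {..<chi G}"
    using f sub1 sub2 unfolding colouring_def by blast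
  have "chi G1 + chi G2 \<le> card (f ` verts G1) + card (f ` verts G2)"
    using chi_le_card_image[OF colouring_mono[OF f sub1] s1]
      chi_le_card_image[OF colouring_mono[OF f sub2] s2] by linarith
  also have "\<dots> = card (f ` verts G1 \<union> f ` verts G2)"
    using card_Un_disjoint[OF fin disj] by simp
  also have "\<dots> \<le> chi G"
    using card_mono[OF finite_lessThan used] by simp
  finally show "chi G1 + chi G2 \<le> chi G" .
qed

lemma chi_del_verts_join:
  assumes j: "join_of G G1 G2" and S: "S \<subseteq> verts G1"
  shows "chi (del_verts G S) = chi (del_verts G1 S) + chi G2"
proof -
  have "S \<inter> verts G2 = {}" using j S unfolding join_of_def by auto
  then have "del_verts G2 S = G2"
    using j del_verts_Int_verts[of G2 S] unfolding join_of_def by simp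
  then show ?thesis using chi_join[OF join_of_del_verts[OF j]] by simp
qed

lemma chi_del_verts_join_cross:
  assumes j: "join_of G G1 G2" and a: "a \<in> verts G1" and b: "b \<in> verts G2"
  shows "chi (del_verts G {a, b}) = chi (del_verts G1 {a}) + chi (del_verts G2 {b})"
proof -
  have "{a, b} \<inter> verts G1 = {a}" "{a, b} \<inter> verts G2 = {b}"
    using j a b unfolding join_of_def by auto
  then have "del_verts G1 {a, b} = del_verts G1 {a}" "del_verts G2 {a, b} = del_verts G2 {b}"
    using j del_verts_Int_verts[of G1 "{a, b}"] del_verts_Int_verts[of G2 "{a, b}"]
    unfolding join_of_def by simp_all
  then show ?thesis using chi_join[OF join_of_del_verts[OF j]] by simp
qed

lemma critical_join_iff:
  assumes j: "join_of G G1 G2"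
  shows "critical G \<longleftrightarrow> critical G1 \<and> critical G2"
proof -
  have j': "join_of G G2 G1" using join_of_commute[OF j] .
  have "chi (del_verts G {v}) < chi G \<longleftrightarrow> chi (del_verts G1 {v}) < chi G1" if "v \<in> verts G1" for v
    using chi_del_verts_join[OF j] chi_join[OF j] that by simp
  moreover have "chi (del_verts G {v}) < chi G \<longleftrightarrow> chi (del_verts G2 {v}) < chi G2"
    if "v \<in> verts G2" for v
    using chi_del_verts_join[OF j'] chi_join[OF j'] that by simp
  moreover have "verts G = verts G1 \<union> verts G2" using j unfolding join_of_def by blast
  ultimately show ?thesis unfolding critical_def by auto
qed

definition edge_critical :: "'a graph \<Rightarrow> bool" where
  "edge_critical G \<longleftrightarrow>
     (\<forall>x y. {x, y} \<in> edges G \<longrightarrow> x \<noteq> y \<longrightarrow> chi (del_verts G {x, y}) \<le> chi G - 2)"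

lemma double_critical_iff: "double_critical G \<longleftrightarrow> critical G \<and> edge_critical G"
  unfolding double_critical_def edge_critical_def ..

text \<open>The bound \<open>2 \<le> \<chi>(G\<^sub>1)\<close> matters in the backward direction because of truncated subtraction.\<close>
lemma chi_del_edge_join_iff:
  assumes j: "join_of G G1 G2" and e: "{x, y} \<in> edges G1" "x \<noteq> y"
  shows "chi (del_verts G {x, y}) \<le> chi G - 2 \<longleftrightarrow> chi (del_verts G1 {x, y}) \<le> chi G1 - 2"
proof -
  have s1: "simple_graph G1" using j unfolding join_of_def by blast
  have "{x, y} \<subseteq> verts G1" using simple_graph_edge_verts[OF s1 e(1)] by blast
  then have "chi (del_verts G {x, y}) = chi (del_verts G1 {x, y}) + chi G2"
    by (rule chi_del_verts_join[OF j])
  moreover have "2 \<le> chi G1" using chi_ge_2_if_edge[OF s1 e] .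
  ultimately show ?thesis using chi_join[OF j] by arith
qed

lemma edge_critical_join_iff:
  assumes j: "join_of G G1 G2" and crit: "critical G1" "critical G2"
  shows "edge_critical G \<longleftrightarrow> edge_critical G1 \<and> edge_critical G2"
proof -
  have j': "join_of G G2 G1" using join_of_commute[OF j] .
  have cross: "chi (del_verts G {a, b}) \<le> chi G - 2" if "a \<in> verts G1" "b \<in> verts G2" for a b
    using chi_del_verts_join_cross[OF j that] chi_join[OF j] crit that
    unfolding critical_def by fastforce
  have "edges G = edges G1 \<union> edges G2 \<union> {{x, y} | x y. x \<in> verts G1 \<and> y \<in> verts G2}"
    using j unfolding join_of_def by blast
  then show ?thesis
    using chi_del_edge_join_iff[OF j] chi_del_edge_join_iff[OF j'] cross
    unfolding edge_critical_def by (auto 0 4)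
qed

lemma double_critical_join_iff:
  assumes "join_of G G1 G2"
  shows "double_critical G \<longleftrightarrow> double_critical G1 \<and> double_critical G2"
  using critical_join_iff[OF assms] edge_critical_join_iff[OF assms]
  unfolding double_critical_iff by blast

theorem proposition16:
  fixes G G1 G2 :: "'a graph"
  assumes "decomposable_into G G1 G2"
  shows "double_critical G \<longleftrightarrow> double_critical G1 \<and> double_critical G2"
  using double_critical_join_iff[OF decomposable_into_imp_join_of[OF assms]] .

end
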